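(* Let $C>0$, $L>0$, $R>0$, $\nu\in\mathbb{R}$, $h>0$ and let $\hat \varphi:\mathbb{R}\to\mathbb{R}$ be any function. Suppose real sequences $v_{C,k},i_{C,k},i_{L,k},v_{L,k},v_{R,k},i_{R,k},v_{M,k},i_{M,k},q_{M,k}$, $k=0,1,2,\dots$, satisfy for all $k$: $$i_{C,k}=C\frac{v_{C,k+1}-v_{C,k}}{h},\quad v_{L,k}=L\frac{i_{L,k+1}-i_{L,k}}{h},\quad v_{R,k}=Ri_{R,k},$$ $$v_{M,k}=\frac{\hat \varphi(q_{M,k+1})-\hat \varphi(q_{M,k})}{h},\quad q_{M,k+1}=q_{M,k}+hi_{M,k},$$ $$v_{C,k}=v_{L,k}+v_{M,k},\quad v_{C,k}=v_{R,k},\quad i_{L,k}+i_{R,k}+i_{C,k}-\nu i_{L,k}=0,\quad i_{L,k}=i_{M,k}.$$ Then: 1) $(i_{L,k},v_{C,k},q_{M,k})$ is an orbit of the three-dimensional map $$\begin{aligned} i_{L,k+1}&=i_{L,k}-\tfrac{1}{L}\big(\hat \varphi(q_{M,k}+hi_{L,k})-\hat \varphi(q_{M,k})\big)+\tfrac{h}{L}v_{C,k},\\ v_{C,k+1}&=\big(1-\tfrac{h}{RC}\big)v_{C,k}+\tfrac{h}{C}(\nu-1)i_{L,k},\\ q_{M,k+1}&=q_{M,k}+hi_{L,k}.\end{aligned}$$ 2) For any step size $h>0$, the function $\Theta_{DMLC}(v_C,i_L,q_M)=RCv_C+Li_L+\hat\varphi(q_M)+R(1-\nu)q_M$ is a first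 integral of this map, i.e. it takes the same value at $k+1$ as at $k$ for all $k\ge0$ along every orbit. 3) Consequently $\mathbb{R}^3$ is foliated into the invariant sets $\mathcal{M}_{DMLC}(\Phi_0)=\{(v_C,i_L,q_M)\in\mathbb{R}^3:\Theta_{DMLC}(v_C,i_L,q_M)=\Phi_0\}$, $\Phi_0\in\mathbb{R}$, and along any orbit of the map lying in $\mathcal{M}_{DMLC}(\Phi_0)$, setting $\varphi^0_{C,k}=h\sum_{j=0}^{k-1}v_{C,j}$ and $y_k=\varphi^0_{C,k}+R(\nu-1)q_{M,0}-CRv_{C,0}$, the pair $(q_{M,k},y_k)$ obeys the two-dimensional map $$q_{M,k+1}=q_{M,k}+\tfrac{h}{L}y_k-\tfrac{h}{L}\hat\varphi(q_{M,k})+\tfrac{h}{L}\Phi_0,\qquad y_{k+1}=\big(1-\tfrac{h}{RC}\big)y_k+\tfrac{h}{C}(\nu-1)q_{M,k}.$$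
   Context: These equations model the dual of a discrete-time memristor Murali-Lakshmanan-Chua circuit: an inductor $L$ in series with a charge-controlled memristor $\varphi_M=\hat\varphi(q_M)$, connected in parallel with a resistor $R$, a capacitor $C$ and a current-controlled current source of value $\nu i_L$, discretized with step size $h$. The quantity $\varphi^0_{C,k}$ is the (discrete) incremental flux of the capacitor. *)

theory Defs
  imports Complex_Main
begin

definition dmlc_map ::
  "real \<Rightarrow> real \<Rightarrow> real \<Rightarrow> real \<Rightarrow> real \<Rightarrow> (real \<Rightarrow> real) \<Rightarrow>
   real \<times> real \<times> real \<Rightarrow> real \<times> real \<times> real" where
  "dmlc_map C L R \<nu> h \<phi> = (\<lambda>(iL, vC, qM).
     (iL - (1 / L) * (\<phi> (qM + h * iL) - \<phi> qM) + (h / L) * vC,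
      (1 - h / (R * C)) * vC + (h / C) * (\<nu> - 1) * iL,
      qM + h * iL))"

definition Theta_DMLC ::
  "real \<Rightarrow> real \<Rightarrow> real \<Rightarrow> real \<Rightarrow> (real \<Rightarrow> real) \<Rightarrow> real \<Rightarrow> real \<Rightarrow> real \<Rightarrow> real" where
  "Theta_DMLC C L R \<nu> \<phi> vC iL qM = R * C * vC + L * iL + \<phi> qM + R * (1 - \<nu>) * qM"

definition M_DMLC ::
  "real \<Rightarrow> real \<Rightarrow> real \<Rightarrow> real \<Rightarrow> (real \<Rightarrow> real) \<Rightarrow> real \<Rightarrow> (real \<times> real \<times> real) set" where
  "M_DMLC C L R \<nu> \<phi> \<Phi>0 = {(vC, iL, qM). Theta_DMLC C L R \<nu> \<phi> vC iL qM = \<Phi>0}"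

end

theory Submission
  imports Defs
begin

text \<open>Cleared of denominators, both the circuit equations and the map read
  L \<Delta>i_L = h v_C - \<Delta>\<phi>(q_M),  RC \<Delta>v_C = Rh(\<nu>-1) i_L - h v_C,  \<Delta>q_M = h i_L,
  so the increment of Theta = RCv_C + Li_L + \<phi>(q_M) + R(1-\<nu>)q_M cancels term by term, for every h.
  The second equation also writes h v_C as the telescoping difference
  RC(v_{C,k} - v_{C,k+1}) + R(\<nu>-1)(q_{M,k+1} - q_{M,k}), so the incremental flux gives
  y_k = R(\<nu>-1)q_{M,k} - RCv_{C,k}. On the level set Theta = \<Phi>0 this means
  L i_L = \<Phi>0 + y - \<phi>(q_M), and eliminating i_L and v_C leaves a planar map for (q_M, y).\<close>

lemma dmlc_map_eq_iff:
  assumes "C \<noteq> 0" "L \<noteq> 0" "R \<noteq> 0"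
  shows "(i', v', q') = dmlc_map C L R \<nu> h \<phi> (i, v, q) \<longleftrightarrow>
           L * (i' - i) = h * v - (\<phi> (q + h * i) - \<phi> q)
         \<and> R * C * (v' - v) = R * h * (\<nu> - 1) * i - h * v
         \<and> q' = q + h * i"
proof -
  have "i' = i - (1 / L) * (\<phi> (q + h * i) - \<phi> q) + (h / L) * v
          \<longleftrightarrow> L * (i' - i) = h * v - (\<phi> (q + h * i) - \<phi> q)"
    using assms by (simp add: field_simps)
  moreover have "v' = (1 - h / (R * C)) * v + (h / C) * (\<nu> - 1) * i
          \<longleftrightarrow> R * C * (v' - v) = R * h * (\<nu> - 1) * i - h * v"
    using assms by (simp add: field_simps) (metis distrib_left mult_cancel_left)
  ultimately show ?thesis
    by (simp add: dmlc_map_def)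
qed

lemma dmlc_circuit_orbit:
  fixes C L R \<nu> h :: real
    and \<phi> :: "real \<Rightarrow> real"
    and vC iC iL vL vR iR vM iM qM :: "nat \<Rightarrow> real"
  assumes nonzero: "C \<noteq> 0" "L \<noteq> 0" "R \<noteq> 0" and "h \<noteq> 0"
    and eC: "\<And>k. iC k = C * (vC (Suc k) - vC k) / h"
    and eL: "\<And>k. vL k = L * (iL (Suc k) - iL k) / h"
    and eR: "\<And>k. vR k = R * iR k"
    and eM: "\<And>k. vM k = (\<phi> (qM (Suc k)) - \<phi> (qM k)) / h"
    and eq: "\<And>k. qM (Suc k) = qM k + h * iM k"
    and k1: "\<And>k. vC k = vL k + vM k"
    and k2: "\<And>k. vC k = vR k"
    and k3: "\<And>k. iL k + iR k + iC k - \<nu> * iL k = 0"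
    and k4: "\<And>k. iL k = iM k"
  shows "(iL (Suc k), vC (Suc k), qM (Suc k)) = dmlc_map C L R \<nu> h \<phi> (iL k, vC k, qM k)"
proof -
  have q_step: "qM (Suc k) = qM k + h * iL k"
    using eq k4 by simp
  have "L * (iL (Suc k) - iL k) = h * vL k"
    using eL \<open>h \<noteq> 0\<close> by simp
  also have "\<dots> = h * vC k - (\<phi> (qM k + h * iL k) - \<phi> (qM k))"
    using k1[of k] eM[of k] q_step \<open>h \<noteq> 0\<close> by (simp add: field_simps)
  finally have i_step: "L * (iL (Suc k) - iL k) = h * vC k - (\<phi> (qM k + h * iL k) - \<phi> (qM k))" .
  have "R * C * (vC (Suc k) - vC k) = R * h * iC k"
    using eC \<open>h \<noteq> 0\<close> by simp
  also have "\<dots> = R * h * (\<nu> - 1) * iL k - h * vC k"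
  proof -
    have iC: "iC k = (\<nu> - 1) * iL k - iR k"
      using k3[of k] by (simp add: algebra_simps)
    show ?thesis
      unfolding iC k2 eR by (simp add: algebra_simps)
  qed
  finally have v_step: "R * C * (vC (Suc k) - vC k) = R * h * (\<nu> - 1) * iL k - h * vC k" .
  show ?thesis
    using q_step i_step v_step by (simp add: dmlc_map_eq_iff[OF nonzero])
qed

lemma Theta_DMLC_dmlc_map:
  assumes "C \<noteq> 0" "L \<noteq> 0" "R \<noteq> 0"
  shows "(case dmlc_map C L R \<nu> h \<phi> (i, v, q) of (i', v', q') \<Rightarrow> Theta_DMLC C L R \<nu> \<phi> v' i' q')
           = Theta_DMLC C L R \<nu> \<phi> v i q"
  using assms by (simp add: dmlc_map_def Theta_DMLC_def field_simps)

lemma M_DMLC_partition: "\<exists>!\<Phi>0. p \<in> M_DMLC C L R \<nu> \<phi> \<Phi>0"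
  by (auto simp: M_DMLC_def)

lemma dmlc_map_preserves_M_DMLC:
  assumes "C \<noteq> 0" "L \<noteq> 0" "R \<noteq> 0" and "(v, i, q) \<in> M_DMLC C L R \<nu> \<phi> \<Phi>0"
  shows "case dmlc_map C L R \<nu> h \<phi> (i, v, q) of (i', v', q') \<Rightarrow> (v', i', q') \<in> M_DMLC C L R \<nu> \<phi> \<Phi>0"
  using Theta_DMLC_dmlc_map[OF assms(1-3), where \<nu> = \<nu> and h = h and \<phi> = \<phi> and i = i and v = v
      and q = q] assms(4)
  by (auto simp: M_DMLC_def split: prod.splits)

context
  fixes C L R \<nu> h :: real
    and \<phi> :: "real \<Rightarrow> real"
    and iL vC qM :: "nat \<Rightarrow> real"
  assumes nonzero: "C \<noteq> 0" "L \<noteq> 0" "R \<noteq> 0"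
    and orbit: "\<And>k. (iL (Suc k), vC (Suc k), qM (Suc k)) = dmlc_map C L R \<nu> h \<phi> (iL k, vC k, qM k)"
begin

lemma Theta_DMLC_orbit_Suc:
  "Theta_DMLC C L R \<nu> \<phi> (vC (Suc k)) (iL (Suc k)) (qM (Suc k))
     = Theta_DMLC C L R \<nu> \<phi> (vC k) (iL k) (qM k)"
  using Theta_DMLC_dmlc_map[OF nonzero, where \<nu> = \<nu> and h = h and \<phi> = \<phi> and i = "iL k" and v = "vC k"
      and q = "qM k"]
  by (simp add: orbit[of k, symmetric])

lemma dmlc_orbit_steps:
  "L * (iL (Suc k) - iL k) = h * vC k - (\<phi> (qM (Suc k)) - \<phi> (qM k))"
  "R * C * (vC (Suc k) - vC k) = R * h * (\<nu> - 1) * iL k - h * vC k"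
  "qM (Suc k) = qM k + h * iL k"
  using orbit[of k] by (simp_all add: dmlc_map_eq_iff[OF nonzero])

lemma dmlc_orbit_flux_step:
  "h * vC k = R * C * (vC k - vC (Suc k)) + R * (\<nu> - 1) * (qM (Suc k) - qM k)"
  using dmlc_orbit_steps(2,3)[of k] by (simp add: algebra_simps)

lemma dmlc_orbit_flux:
  "h * (\<Sum>j<k. vC j) = R * C * (vC 0 - vC k) + R * (\<nu> - 1) * (qM k - qM 0)"
proof -
  have "h * (\<Sum>j<k. vC j)
      = R * C * (\<Sum>j<k. vC j - vC (Suc j)) + R * (\<nu> - 1) * (\<Sum>j<k. qM (Suc j) - qM j)"
    by (simp add: sum_distrib_left sum.distrib dmlc_orbit_flux_step)
  then show ?thesis
    by (simp add: sum_lessThan_telescope sum_lessThan_telescope')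
qed

lemma dmlc_orbit_two_dim_map:
  assumes level: "\<And>k. (vC k, iL k, qM k) \<in> M_DMLC C L R \<nu> \<phi> \<Phi>0"
  defines "y \<equiv> \<lambda>k. h * (\<Sum>j<k. vC j) + R * (\<nu> - 1) * qM 0 - C * R * vC 0"
  shows "qM (Suc k) = qM k + (h / L) * y k - (h / L) * \<phi> (qM k) + (h / L) * \<Phi>0"
    and "y (Suc k) = (1 - h / (R * C)) * y k + (h / C) * (\<nu> - 1) * qM k"
proof -
  have y_eq: "y k = R * (\<nu> - 1) * qM k - R * C * vC k" for k
    unfolding y_def dmlc_orbit_flux by (simp add: algebra_simps)
  have L_iL: "L * iL k = \<Phi>0 + y k - \<phi> (qM k)"
    using level[of k] by (simp add: M_DMLC_def Theta_DMLC_def y_eq algebra_simps)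
  have "h * iL k = (h / L) * (L * iL k)"
    using nonzero by simp
  then have "qM (Suc k) = qM k + (h / L) * (\<Phi>0 + y k - \<phi> (qM k))"
    unfolding L_iL using dmlc_orbit_steps(3) by simp
  then show "qM (Suc k) = qM k + (h / L) * y k - (h / L) * \<phi> (qM k) + (h / L) * \<Phi>0"
    by (simp add: algebra_simps)
  have "y (Suc k) = y k + (h / (R * C)) * (R * C * vC k)"
    using nonzero by (simp add: y_def algebra_simps)
  also have "\<dots> = y k + (h / (R * C)) * (R * (\<nu> - 1) * qM k - y k)"
    by (simp add: y_eq)
  also have "\<dots> = (1 - h / (R * C)) * y k + (h / C) * (\<nu> - 1) * qM k"
    using nonzero by (simp add: field_simps)
  finally show "y (Suc k) = (1 - h / (R * C)) * y k + (h / C) * (\<nu> - 1) * qM k" .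
qed

end

theorem proposition4:
  fixes C L R \<nu> h :: real
    and \<phi> :: "real \<Rightarrow> real"
    and vC iC iL vL vR iR vM iM qM :: "nat \<Rightarrow> real"
  assumes hC: "C > 0" and hL: "L > 0" and hR: "R > 0" and hh: "h > 0"
    and eC: "\<And>k. iC k = C * (vC (Suc k) - vC k) / h"
    and eL: "\<And>k. vL k = L * (iL (Suc k) - iL k) / h"
    and eR: "\<And>k. vR k = R * iR k"
    and eM: "\<And>k. vM k = (\<phi> (qM (Suc k)) - \<phi> (qM k)) / h"
    and eq: "\<And>k. qM (Suc k) = qM k + h * iM k"
    and k1: "\<And>k. vC k = vL k + vM k"
    and k2: "\<And>k. vC k = vR k"
    and k3: "\<And>k. iL k + iR k + iC k - \<nu> * iL k = 0"
    and k4: "\<And>k. iL k = iM k"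
  shows
    \<comment> \<open>1) orbit of the three-dimensional map\<close>
    "(\<forall>k. (iL (Suc k), vC (Suc k), qM (Suc k)) = dmlc_map C L R \<nu> h \<phi> (iL k, vC k, qM k))
     \<comment> \<open>2) Theta is a first integral of the map, and is conserved along the orbit\<close>
     \<and> (\<forall>i v q. (case dmlc_map C L R \<nu> h \<phi> (i, v, q) of (i', v', q') \<Rightarrow>
               Theta_DMLC C L R \<nu> \<phi> v' i' q') = Theta_DMLC C L R \<nu> \<phi> v i q)
     \<and> (\<forall>k. Theta_DMLC C L R \<nu> \<phi> (vC (Suc k)) (iL (Suc k)) (qM (Suc k))
            = Theta_DMLC C L R \<nu> \<phi> (vC k) (iL k) (qM k))
     \<comment> \<open>3a) R^3 is foliated into the invariant level sets\<close>
     \<and> (\<forall>p :: real \<times> real \<times> real. \<exists>!\<Phi>0. p \<in> M_DMLC C L R \<nu> \<phi> \<Phi>0)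
     \<and> (\<forall>\<Phi>0 i v q. (v, i, q) \<in> M_DMLC C L R \<nu> \<phi> \<Phi>0 \<longrightarrow>
          (case dmlc_map C L R \<nu> h \<phi> (i, v, q) of (i', v', q') \<Rightarrow>
             (v', i', q') \<in> M_DMLC C L R \<nu> \<phi> \<Phi>0))
     \<comment> \<open>3b) reduction to the two-dimensional map along orbits in M(Phi0)\<close>
     \<and> (\<forall>\<Phi>0. (\<forall>k. (vC k, iL k, qM k) \<in> M_DMLC C L R \<nu> \<phi> \<Phi>0) \<longrightarrow>
          (let y = (\<lambda>k. h * (\<Sum>j<k. vC j) + R * (\<nu> - 1) * qM 0 - C * R * vC 0) in
           \<forall>k. qM (Suc k) = qM k + (h / L) * y k - (h / L) * \<phi> (qM k) + (h / L) * \<Phi>0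
             \<and> y (Suc k) = (1 - h / (R * C)) * y k + (h / C) * (\<nu> - 1) * qM k))"
proof -
  have nonzero: "C \<noteq> 0" "L \<noteq> 0" "R \<noteq> 0" and "h \<noteq> 0"
    using hC hL hR hh by auto
  have orbit: "(iL (Suc k), vC (Suc k), qM (Suc k)) = dmlc_map C L R \<nu> h \<phi> (iL k, vC k, qM k)" for k
    using nonzero \<open>h \<noteq> 0\<close> eC eL eR eM eq k1 k2 k3 k4 by (rule dmlc_circuit_orbit)
  have conserved: "Theta_DMLC C L R \<nu> \<phi> (vC (Suc k)) (iL (Suc k)) (qM (Suc k))
      = Theta_DMLC C L R \<nu> \<phi> (vC k) (iL k) (qM k)" for k
    using nonzero orbit by (rule Theta_DMLC_orbit_Suc)
  have planar: "let y = (\<lambda>k. h * (\<Sum>j<k. vC j) + R * (\<nu> - 1) * qM 0 - C * R * vC 0) in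
      \<forall>k. qM (Suc k) = qM k + (h / L) * y k - (h / L) * \<phi> (qM k) + (h / L) * \<Phi>0
        \<and> y (Suc k) = (1 - h / (R * C)) * y k + (h / C) * (\<nu> - 1) * qM k"
    if "\<forall>k. (vC k, iL k, qM k) \<in> M_DMLC C L R \<nu> \<phi> \<Phi>0" for \<Phi>0
    using dmlc_orbit_two_dim_map[where iL = iL and vC = vC and qM = qM,
        OF nonzero orbit spec[OF that]]
    by (simp add: Let_def)
  show ?thesis
    using orbit Theta_DMLC_dmlc_map[OF nonzero] conserved M_DMLC_partition
      dmlc_map_preserves_M_DMLC[OF nonzero] planar
    by (intro conjI allI impI) blast+
qed

end
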